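(* (i) Let $C'$ be a ternary Euclidean LCD $[n,k]$ code with $k\ge1$. Then there exist a ternary Euclidean LCD $[n,k-1]$ code $C$ with generator matrix $G$ and a vector $\mathbf{y}\in C^{\perp_E}$ with $wt(\mathbf{y})\not\equiv 0\pmod 3$ such that $C'$ is the code with generator matrix $\begin{pmatrix}\mathbf{y}\\ G\end{pmatrix}$. (ii) Let $C'$ be a quaternary Hermitian LCD $[n,k]$ code with $k\ge 1$. Then there exist a quaternary Hermitian LCD $[n,k-1]$ code $C$ with generator matrix $G$ and a vector $\mathbf{y}\in C^{\perp_H}$ of odd Hamming weight such that $C'$ is the code with generator matrix $\begin{pmatrix}\mathbf{y}\\ G\end{pmatrix}$.
   Context: Ternary and quaternary codes are linear codes over $\mathbb{F}_3$ and $\mathbb{F}_4$. An $[n,k]$ code is a $k$-dimensional subspace; a generator matrix has rows forming a basis. $wt$ is the Hamming weight. Euclidean inner product $\langle x,y\rangle_E=\sum x_iy_i$ with dual $C^{\perp_E}$; on $\mathbb{F}_4^n$ the Hermitian inner product is $\langle x,y\rangle_H=\sum x_iy_i^2$ with dual $C^{\perp_H}$. A code is (Euclidean/Hermitian) LCD if $C\cap C^{\perp}=\{0\}$. *)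

theory Defs
  imports "HOL-Analysis.Analysis"
begin

datatype F3 = T0 | T1 | T2

fun f3_add :: "F3 \<Rightarrow> F3 \<Rightarrow> F3" where
  "f3_add T0 b = b"
| "f3_add a T0 = a"
| "f3_add T1 T1 = T2"
| "f3_add T1 T2 = T0"
| "f3_add T2 T1 = T0"
| "f3_add T2 T2 = T1"

fun f3_mul :: "F3 \<Rightarrow> F3 \<Rightarrow> F3" where
  "f3_mul T0 b = T0"
| "f3_mul a T0 = T0"
| "f3_mul T1 b = b"
| "f3_mul a T1 = a"
| "f3_mul T2 T2 = T1"

fun f3_neg :: "F3 \<Rightarrow> F3" where
  "f3_neg T0 = T0" | "f3_neg T1 = T2" | "f3_neg T2 = T1"

instantiation F3 :: field
begin
definition "0 = T0"
definition "1 = T1"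
definition "a + b = f3_add a b"
definition "- a = f3_neg a"
definition "a - b = f3_add a (f3_neg b)"
definition "a * b = f3_mul a b"
definition "inverse (a::F3) = a"
definition divide_F3 :: "F3 \<Rightarrow> F3 \<Rightarrow> F3" where "divide_F3 a b = f3_mul a b"
instance proof
  fix a b c :: F3
  show "a + b + c = a + (b + c)" by (cases a; cases b; cases c; simp add: zero_F3_def one_F3_def plus_F3_def uminus_F3_def minus_F3_def times_F3_def inverse_F3_def divide_F3_def)
  show "a + b = b + a" by (cases a; cases b; simp add: zero_F3_def one_F3_def plus_F3_def uminus_F3_def minus_F3_def times_F3_def inverse_F3_def divide_F3_def)
  show "0 + a = a" by (cases a; simp add: zero_F3_def one_F3_def plus_F3_def uminus_F3_def minus_F3_def times_F3_def inverse_F3_def divide_F3_def)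
  show "- a + a = 0" by (cases a; simp add: zero_F3_def one_F3_def plus_F3_def uminus_F3_def minus_F3_def times_F3_def inverse_F3_def divide_F3_def)
  show "a - b = a + - b" by (cases a; cases b; simp add: zero_F3_def one_F3_def plus_F3_def uminus_F3_def minus_F3_def times_F3_def inverse_F3_def divide_F3_def)
  show "a * b * c = a * (b * c)" by (cases a; cases b; cases c; simp add: zero_F3_def one_F3_def plus_F3_def uminus_F3_def minus_F3_def times_F3_def inverse_F3_def divide_F3_def)
  show "a * b = b * a" by (cases a; cases b; simp add: zero_F3_def one_F3_def plus_F3_def uminus_F3_def minus_F3_def times_F3_def inverse_F3_def divide_F3_def)
  show "1 * a = a" by (cases a; simp add: zero_F3_def one_F3_def plus_F3_def uminus_F3_def minus_F3_def times_F3_def inverse_F3_def divide_F3_def)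
  show "(a + b) * c = a * c + b * c" by (cases a; cases b; cases c; simp add: zero_F3_def one_F3_def plus_F3_def uminus_F3_def minus_F3_def times_F3_def inverse_F3_def divide_F3_def)
  show "(0::F3) \<noteq> 1" by (simp add: zero_F3_def one_F3_def plus_F3_def uminus_F3_def minus_F3_def times_F3_def inverse_F3_def divide_F3_def)
  show "a \<noteq> 0 \<Longrightarrow> inverse a * a = 1" by (cases a; simp add: zero_F3_def one_F3_def plus_F3_def uminus_F3_def minus_F3_def times_F3_def inverse_F3_def divide_F3_def)
  show "Rings.divide a b = a * inverse b" by (cases a; cases b; simp add: zero_F3_def one_F3_def plus_F3_def uminus_F3_def minus_F3_def times_F3_def inverse_F3_def divide_F3_def)
  show "inverse (0::F3) = 0" by (simp add: zero_F3_def one_F3_def plus_F3_def uminus_F3_def minus_F3_def times_F3_def inverse_F3_def divide_F3_def)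
qed
end

section \<open>The field F4 = GF(4) = {0, 1, w, w^2} with w^2 = w + 1\<close>

datatype F4 = Q0 | Q1 | QW | QW2

fun f4_add :: "F4 \<Rightarrow> F4 \<Rightarrow> F4" where
  "f4_add Q0 b = b"
| "f4_add a Q0 = a"
| "f4_add Q1 Q1 = Q0"
| "f4_add Q1 QW = QW2"
| "f4_add Q1 QW2 = QW"
| "f4_add QW Q1 = QW2"
| "f4_add QW QW = Q0"
| "f4_add QW QW2 = Q1"
| "f4_add QW2 Q1 = QW"
| "f4_add QW2 QW = Q1"
| "f4_add QW2 QW2 = Q0"

fun f4_mul :: "F4 \<Rightarrow> F4 \<Rightarrow> F4" where
  "f4_mul Q0 b = Q0"
| "f4_mul a Q0 = Q0"
| "f4_mul Q1 b = b"
| "f4_mul a Q1 = a"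
| "f4_mul QW QW = QW2"
| "f4_mul QW QW2 = Q1"
| "f4_mul QW2 QW = Q1"
| "f4_mul QW2 QW2 = QW"

fun f4_inv :: "F4 \<Rightarrow> F4" where
  "f4_inv Q0 = Q0" | "f4_inv Q1 = Q1" | "f4_inv QW = QW2" | "f4_inv QW2 = QW"

instantiation F4 :: field
begin
definition "0 = Q0"
definition "1 = Q1"
definition "a + b = f4_add a b"
definition "- (a::F4) = a"
definition "a - b = f4_add a b"
definition "a * b = f4_mul a b"
definition "inverse a = f4_inv a"
definition divide_F4 :: "F4 \<Rightarrow> F4 \<Rightarrow> F4" where "divide_F4 a b = f4_mul a (f4_inv b)"
instance proof
  fix a b c :: F4
  show "a + b + c = a + (b + c)" by (cases a; cases b; cases c; simp add: zero_F4_def one_F4_def plus_F4_def uminus_F4_def minus_F4_def times_F4_def inverse_F4_def divide_F4_def)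
  show "a + b = b + a" by (cases a; cases b; simp add: zero_F4_def one_F4_def plus_F4_def uminus_F4_def minus_F4_def times_F4_def inverse_F4_def divide_F4_def)
  show "0 + a = a" by (cases a; simp add: zero_F4_def one_F4_def plus_F4_def uminus_F4_def minus_F4_def times_F4_def inverse_F4_def divide_F4_def)
  show "- a + a = 0" by (cases a; simp add: zero_F4_def one_F4_def plus_F4_def uminus_F4_def minus_F4_def times_F4_def inverse_F4_def divide_F4_def)
  show "a - b = a + - b" by (cases a; cases b; simp add: zero_F4_def one_F4_def plus_F4_def uminus_F4_def minus_F4_def times_F4_def inverse_F4_def divide_F4_def)
  show "a * b * c = a * (b * c)" by (cases a; cases b; cases c; simp add: zero_F4_def one_F4_def plus_F4_def uminus_F4_def minus_F4_def times_F4_def inverse_F4_def divide_F4_def)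
  show "a * b = b * a" by (cases a; cases b; simp add: zero_F4_def one_F4_def plus_F4_def uminus_F4_def minus_F4_def times_F4_def inverse_F4_def divide_F4_def)
  show "1 * a = a" by (cases a; simp add: zero_F4_def one_F4_def plus_F4_def uminus_F4_def minus_F4_def times_F4_def inverse_F4_def divide_F4_def)
  show "(a + b) * c = a * c + b * c" by (cases a; cases b; cases c; simp add: zero_F4_def one_F4_def plus_F4_def uminus_F4_def minus_F4_def times_F4_def inverse_F4_def divide_F4_def)
  show "(0::F4) \<noteq> 1" by (simp add: zero_F4_def one_F4_def plus_F4_def uminus_F4_def minus_F4_def times_F4_def inverse_F4_def divide_F4_def)
  show "a \<noteq> 0 \<Longrightarrow> inverse a * a = 1" by (cases a; simp add: zero_F4_def one_F4_def plus_F4_def uminus_F4_def minus_F4_def times_F4_def inverse_F4_def divide_F4_def)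
  show "Rings.divide a b = a * inverse b" by (cases a; cases b; simp add: zero_F4_def one_F4_def plus_F4_def uminus_F4_def minus_F4_def times_F4_def inverse_F4_def divide_F4_def)
  show "inverse (0::F4) = 0" by (simp add: zero_F4_def one_F4_def plus_F4_def uminus_F4_def minus_F4_def times_F4_def inverse_F4_def divide_F4_def)
qed
end

definition linear_code :: "('a::field ^ 'n) set \<Rightarrow> nat \<Rightarrow> bool" where
  "linear_code C k \<longleftrightarrow> vec.subspace C \<and> vec.dim C = k"

definition wt :: "'a::zero ^ 'n \<Rightarrow> nat" where
  "wt x = card {i. x $ i \<noteq> 0}"

definition inner_E :: "'a::field ^ 'n \<Rightarrow> 'a ^ 'n \<Rightarrow> 'a" where
  "inner_E x y = (\<Sum>i\<in>UNIV. x $ i * y $ i)"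

definition inner_H :: "F4 ^ 'n \<Rightarrow> F4 ^ 'n \<Rightarrow> F4" where
  "inner_H x y = (\<Sum>i\<in>UNIV. x $ i * (y $ i)^2)"

definition dual_E :: "('a::field ^ 'n) set \<Rightarrow> ('a ^ 'n) set" where
  "dual_E C = {x. \<forall>c\<in>C. inner_E x c = 0}"

definition dual_H :: "(F4 ^ 'n) set \<Rightarrow> (F4 ^ 'n) set" where
  "dual_H C = {x. \<forall>c\<in>C. inner_H x c = 0}"

definition LCD_E :: "('a::field ^ 'n) set \<Rightarrow> bool" where
  "LCD_E C \<longleftrightarrow> C \<inter> dual_E C = {0}"

definition LCD_H :: "(F4 ^ 'n) set \<Rightarrow> bool" where
  "LCD_H C \<longleftrightarrow> C \<inter> dual_H C = {0}"

definition gen_matrix :: "('a::field ^ 'n) list \<Rightarrow> ('a ^ 'n) set \<Rightarrow> bool" where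
  "gen_matrix gs C \<longleftrightarrow> distinct gs \<and> vec.independent (set gs) \<and> vec.span (set gs) = C"

end

theory Submission
  imports Defs
begin

text \<open>A nonzero nondegenerate
  code contains an anisotropic vector y: for the Euclidean form in characteristic 3 by polarization,
  and for the Hermitian form over F4 because if all vectors were isotropic, the trace
  p + p^2 of both \<langle>x, z\<rangle> and \<langle>\<omega>x, z\<rangle> would vanish, forcing \<langle>x, z\<rangle> = 0.
  Since \<langle>y, y\<rangle> \<noteq> 0, the code is the direct sum of the line through y and the hyperplane
  C = {x \<in> C'. \<langle>x, y\<rangle> = 0}, which is again nondegenerate and orthogonal to y; prepending y to
  a basis of C gives a generator matrix of C'. Finally \<langle>y, y\<rangle> is wt(y) read in the prime field,
  because a^2 = 1 for nonzero a in F3 and a^3 = 1 for nonzero a in F4.\<close>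

lemma gen_matrix_exists:
  assumes "vec.subspace C"
  obtains G where "gen_matrix G C"
proof -
  obtain B where B: "B \<subseteq> C" "vec.independent B" "C \<subseteq> vec.span B"
    by (meson vec.basis_exists)
  obtain G where G: "set G = B" "distinct G"
    using finite_distinct_list[OF vec.finiteI_independent[OF B(2)]] by blast
  have "vec.span B = C"
    using vec.span_subspace[OF B(1,3) assms] .
  then have "gen_matrix G C"
    unfolding gen_matrix_def using G B(2) by simp
  then show thesis
    by (rule that)
qed

lemma gen_matrix_dim: "gen_matrix G C \<Longrightarrow> vec.dim C = length G"
  unfolding gen_matrix_def by (metis distinct_card vec.dim_span_eq_card_independent)

lemma gen_matrix_Cons:
  assumes G: "gen_matrix G C" and y: "y \<notin> C"
  shows "gen_matrix (y # G) (vec.span (insert y C))"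
proof -
  have C: "vec.span (set G) = C" and "distinct G" "vec.independent (set G)"
    using G unfolding gen_matrix_def by auto
  moreover have "y \<notin> set G"
    using y vec.span_base C by blast
  moreover have "vec.independent (insert y (set G))"
    using vec.independent_insertI y C \<open>vec.independent (set G)\<close> by blast
  moreover have "vec.span (insert y (set G)) = vec.span (insert y C)"
    unfolding vec.span_insert C[symmetric] vec.span_span ..
  ultimately show ?thesis
    unfolding gen_matrix_def by simp
qed

locale orthogonality_form =
  fixes f :: "'a::field ^ 'n \<Rightarrow> 'a ^ 'n \<Rightarrow> 'a"
  assumes add_left: "f (x + z) w = f x w + f z w"
    and scale_left: "f (c *s x) w = c * f x w"
    and orthogonal_sym: "f x w = 0 \<Longrightarrow> f w x = 0"
begin

definition orth :: "('a ^ 'n) set \<Rightarrow> ('a ^ 'n) set" where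
  "orth C = {x. \<forall>c\<in>C. f x c = 0}"

lemma zero_left [simp]: "f 0 w = 0"
  using scale_left[of 0 0 w] by simp

lemma diff_left: "f (x - z) w = f x w - f z w"
  using add_left[of "x - z" z w] by (simp add: algebra_simps)

lemma nonorthogonal_pair_if_nondegenerate:
  assumes "C \<inter> orth C = {0}" "C \<noteq> {0}"
  obtains x z where "x \<in> C" "z \<in> C" "f x z \<noteq> 0"
proof (rule ccontr)
  assume "\<not> thesis"
  with that have "C \<subseteq> orth C"
    unfolding orth_def by blast
  with assms show False
    by blast
qed

context
  fixes C' :: "('a ^ 'n) set" and y :: "'a ^ 'n"
  assumes C': "vec.subspace C'" and y: "y \<in> C'" "f y y \<noteq> 0"
begin

lemma projection_orthogonal_to_anisotropic:
  assumes "x \<in> C'"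
  shows "x - (f x y / f y y) *s y \<in> {z \<in> C'. f z y = 0}"
  using assms C' y by (simp add: diff_left scale_left vec.subspace_diff vec.subspace_scale)

lemma subspace_orthogonal_hyperplane: "vec.subspace {x \<in> C'. f x y = 0}"
  unfolding vec.subspace_def
  by (simp add: vec.subspace_0[OF C'] vec.subspace_add[OF C'] vec.subspace_scale[OF C']
      add_left scale_left)

lemma span_insert_orthogonal_hyperplane: "vec.span (insert y {x \<in> C'. f x y = 0}) = C'"
proof
  show "vec.span (insert y {x \<in> C'. f x y = 0}) \<subseteq> C'"
    using C' y by (intro vec.span_minimal) auto
  show "C' \<subseteq> vec.span (insert y {x \<in> C'. f x y = 0})"
  proof
    fix x assume "x \<in> C'"
    then have "x - (f x y / f y y) *s y \<in> vec.span {x \<in> C'. f x y = 0}"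
      by (intro vec.span_base projection_orthogonal_to_anisotropic)
    then show "x \<in> vec.span (insert y {x \<in> C'. f x y = 0})"
      unfolding vec.span_insert by blast
  qed
qed

lemma nondegenerate_orthogonal_hyperplane:
  assumes "C' \<inter> orth C' = {0}"
  defines "H \<equiv> {x \<in> C'. f x y = 0}"
  shows "H \<inter> orth H = {0}"
proof -
  have "x \<in> orth C'" if x: "x \<in> H" "x \<in> orth H" for x
    unfolding orth_def mem_Collect_eq
  proof (rule ballI)
    fix c assume "c \<in> C'"
    let ?p = "c - (f c y / f y y) *s y"
    have "?p \<in> H"
      unfolding H_def using \<open>c \<in> C'\<close> by (rule projection_orthogonal_to_anisotropic)
    then have "f ?p x = 0"
      using x(2) unfolding orth_def by (blast intro: orthogonal_sym)
    moreover have "f y x = 0"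
      using x(1) unfolding H_def by (blast intro: orthogonal_sym)
    ultimately have "f c x = 0"
      by (simp add: diff_left scale_left)
    then show "f x c = 0"
      by (rule orthogonal_sym)
  qed
  moreover have "0 \<in> H \<inter> orth H"
    using subspace_orthogonal_hyperplane vec.subspace_0 unfolding H_def orth_def by auto
  ultimately show ?thesis
    using assms(1) unfolding H_def by blast
qed

end

lemma split_off_anisotropic:
  assumes C': "linear_code C' k" "C' \<inter> orth C' = {0}" and y: "y \<in> C'" "f y y \<noteq> 0"
  obtains C G where "linear_code C (k - 1)" "C \<inter> orth C = {0}" "gen_matrix G C"
    "y \<in> orth C" "gen_matrix (y # G) C'"
proof -
  let ?H = "{x \<in> C'. f x y = 0}"
  have "vec.subspace C'"
    using C'(1) unfolding linear_code_def by blast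
  note hyperplane = subspace_orthogonal_hyperplane[OF this y]
    span_insert_orthogonal_hyperplane[OF this y]
    nondegenerate_orthogonal_hyperplane[OF this y C'(2)]
  obtain G where G: "gen_matrix G ?H"
    using gen_matrix_exists hyperplane(1) by blast
  have "y \<notin> ?H"
    using y by simp
  from gen_matrix_Cons[OF G this] have yG: "gen_matrix (y # G) C'"
    unfolding hyperplane(2) .
  have "vec.dim ?H = k - 1"
    using C'(1) gen_matrix_dim[OF G] gen_matrix_dim[OF yG] unfolding linear_code_def by auto
  then have "linear_code ?H (k - 1)"
    unfolding linear_code_def using hyperplane(1) by blast
  moreover have "y \<in> orth ?H"
    unfolding orth_def by (blast intro: orthogonal_sym)
  ultimately show thesis
    using G yG hyperplane(3) by (intro that)
qed

end

lemma inner_E_add_left: "inner_E (x + z) w = inner_E x w + inner_E z w"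
  unfolding inner_E_def by (simp add: distrib_right sum.distrib)

lemma inner_E_scale_left: "inner_E (c *s x) w = c * inner_E x w"
  unfolding inner_E_def by (simp add: sum_distrib_left mult.assoc)

lemma inner_E_commute: "inner_E x w = inner_E w x"
  unfolding inner_E_def by (simp add: mult.commute)

interpretation inner_E: orthogonality_form inner_E
  rewrites "orthogonality_form.orth inner_E = dual_E"
proof -
  show form: "orthogonality_form inner_E"
    by unfold_locales (rule inner_E_add_left, rule inner_E_scale_left, metis inner_E_commute)
  show "orthogonality_form.orth inner_E = dual_E"
    by (intro ext) (simp add: orthogonality_form.orth_def[OF form] dual_E_def)
qed

lemma inner_E_add_self:
  "inner_E (x + z) (x + z) = inner_E x x + inner_E z z + 2 * inner_E x z"
  unfolding inner_E_def by (simp add: sum.distrib sum_distrib_left algebra_simps)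

lemma inner_E_anisotropic_exists:
  fixes C :: "('a::field ^ 'n) set"
  assumes "(2::'a) \<noteq> 0" "vec.subspace C" "C \<inter> dual_E C = {0}" "C \<noteq> {0}"
  obtains y where "y \<in> C" "inner_E y y \<noteq> 0"
proof (rule ccontr)
  assume "\<not> thesis"
  with that have isotropic: "inner_E y y = 0" if "y \<in> C" for y
    using \<open>y \<in> C\<close> by blast
  obtain x z where xz: "x \<in> C" "z \<in> C" "inner_E x z \<noteq> 0"
    using inner_E.nonorthogonal_pair_if_nondegenerate[OF assms(3,4)] .
  then have "x + z \<in> C"
    using assms(2) vec.subspace_add by blast
  then have "2 * inner_E x z = 0"
    using inner_E_add_self[of x z] isotropic xz(1,2) by simp
  with assms(1) xz(3) show False
    by simp
qed

lemmas F3_defs = zero_F3_def one_F3_def plus_F3_def uminus_F3_def minus_F3_def times_F3_def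
  inverse_F3_def divide_F3_def

lemma two_F3_neq_0: "(2::F3) \<noteq> 0"
  unfolding numeral_Bit0 numeral_One by (simp add: F3_defs)

lemma three_F3_eq_0: "(3::F3) = 0"
  unfolding numeral_Bit1 numeral_One by (simp add: F3_defs)

lemma of_nat_F3_eq_0: "3 dvd m \<Longrightarrow> (of_nat m :: F3) = 0"
  by (elim dvdE) (simp add: three_F3_eq_0)

lemma inner_E_self_F3: "inner_E (y :: F3 ^ 'n) y = of_nat (wt y)"
proof -
  have "a * a = of_bool (a \<noteq> 0)" for a :: F3
    by (cases a) (simp_all add: F3_defs)
  then show ?thesis
    unfolding inner_E_def wt_def by simp
qed

lemmas F4_defs = zero_F4_def one_F4_def plus_F4_def uminus_F4_def minus_F4_def times_F4_def
  inverse_F4_def divide_F4_def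

lemma two_F4_eq_0: "(2::F4) = 0"
  unfolding numeral_Bit0 numeral_One by (simp add: F4_defs)

lemma of_nat_F4_eq_0: "even m \<Longrightarrow> (of_nat m :: F4) = 0"
  by (elim evenE) (simp add: two_F4_eq_0)

lemma F4_square_add: "((a::F4) + b)^2 = a^2 + b^2"
  by (cases a; cases b) (simp_all add: F4_defs power2_eq_square)

lemma F4_square_sum: "(\<Sum>i\<in>A. g i :: F4)^2 = (\<Sum>i\<in>A. (g i)^2)"
  by (induction A rule: infinite_finite_induct) (simp_all add: F4_square_add)

lemma inner_H_self: "inner_H y y = of_nat (wt y)"
proof -
  have "a * a^2 = of_bool (a \<noteq> 0)" for a :: F4
    by (cases a) (simp_all add: F4_defs power2_eq_square)
  then show ?thesis
    unfolding inner_H_def wt_def by simp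
qed

lemma inner_H_add_left: "inner_H (x + z) w = inner_H x w + inner_H z w"
  unfolding inner_H_def by (simp add: distrib_right sum.distrib)

lemma inner_H_add_right: "inner_H w (x + z) = inner_H w x + inner_H w z"
  unfolding inner_H_def by (simp add: F4_square_add distrib_left sum.distrib)

lemma inner_H_scale_left: "inner_H (c *s x) w = c * inner_H x w"
  unfolding inner_H_def by (simp add: sum_distrib_left mult.assoc)

text \<open>Conjugation on F4 is the Frobenius map a \<mapsto> a^2, so this is Hermitian symmetry.\<close>

lemma inner_H_swap: "inner_H w x = (inner_H x w)^2"
proof -
  have "(a * b^2)^2 = b * a^2" for a b :: F4
    by (cases a; cases b) (simp_all add: F4_defs power2_eq_square)
  then show ?thesis
    unfolding inner_H_def F4_square_sum by simp
qed

lemma inner_H_orthogonal_sym: "inner_H x w = 0 \<Longrightarrow> inner_H w x = 0"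
  by (simp add: inner_H_swap[of w x])

interpretation inner_H: orthogonality_form inner_H
  rewrites "orthogonality_form.orth inner_H = dual_H"
proof -
  show form: "orthogonality_form inner_H"
    by unfold_locales (simp_all add: inner_H_add_left inner_H_scale_left inner_H_orthogonal_sym)
  show "orthogonality_form.orth inner_H = dual_H"
    by (intro ext) (simp add: orthogonality_form.orth_def[OF form] dual_H_def)
qed

text \<open>p + p^2 is the trace of p over F2, and the trace form of F4/F2 is nondegenerate.\<close>

lemma F4_eq_0_if_traces_vanish: "(p::F4) + p^2 = 0 \<Longrightarrow> QW * p + (QW * p)^2 = 0 \<Longrightarrow> p = 0"
  by (cases p) (simp_all add: F4_defs power2_eq_square)

lemma inner_H_anisotropic_exists:
  assumes "vec.subspace C" "C \<inter> dual_H C = {0}" "C \<noteq> {0}"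
  obtains y where "y \<in> C" "inner_H y y \<noteq> 0"
proof (rule ccontr)
  assume "\<not> thesis"
  with that have isotropic: "inner_H y y = 0" if "y \<in> C" for y
    using \<open>y \<in> C\<close> by blast
  obtain x z where xz: "x \<in> C" "z \<in> C" "inner_H x z \<noteq> 0"
    using inner_H.nonorthogonal_pair_if_nondegenerate[OF assms(2,3)] .
  have trace: "inner_H u z + (inner_H u z)^2 = 0" if "u \<in> C" for u
  proof -
    have "u + z \<in> C"
      using assms(1) xz(2) that vec.subspace_add by blast
    then show ?thesis
      using isotropic[of "u + z"] isotropic[OF that] isotropic[OF xz(2)] inner_H_swap[of z u]
      by (simp add: inner_H_add_left inner_H_add_right add_ac)
  qed
  have "QW *s x \<in> C"
    using assms(1) xz(1) vec.subspace_scale by blast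
  then have "QW * inner_H x z + (QW * inner_H x z)^2 = 0"
    using trace[of "QW *s x"] by (simp only: inner_H_scale_left)
  with trace[OF xz(1)] xz(3) show False
    using F4_eq_0_if_traces_vanish by blast
qed

lemma linear_code_nonzero: "linear_code C k \<Longrightarrow> k \<ge> 1 \<Longrightarrow> C \<noteq> {0}"
  unfolding linear_code_def by auto

lemma ternary_Euclidean_LCD_decomposition:
  fixes C' :: "(F3 ^ 'n) set"
  assumes C': "linear_code C' k" "LCD_E C'" "k \<ge> 1"
  shows "\<exists>C G (y :: F3 ^ 'n). linear_code C (k - 1) \<and> LCD_E C \<and> gen_matrix G C \<and>
          y \<in> dual_E C \<and> wt y mod 3 \<noteq> 0 \<and> gen_matrix (y # G) C'"
proof -
  have "vec.subspace C'" and nondegenerate: "C' \<inter> dual_E C' = {0}"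
    using C'(1,2) unfolding linear_code_def LCD_E_def by auto
  obtain y where y: "y \<in> C'" "inner_E y y \<noteq> 0"
    using inner_E_anisotropic_exists[OF two_F3_neq_0 \<open>vec.subspace C'\<close> nondegenerate
        linear_code_nonzero[OF C'(1,3)]] .
  then obtain C G where "linear_code C (k - 1)" "C \<inter> dual_E C = {0}" "gen_matrix G C"
      "y \<in> dual_E C" "gen_matrix (y # G) C'"
    using inner_E.split_off_anisotropic[OF C'(1) nondegenerate] by blast
  moreover have "wt y mod 3 \<noteq> 0"
    using y(2) of_nat_F3_eq_0 unfolding inner_E_self_F3 by (metis mod_0_imp_dvd)
  ultimately show ?thesis
    unfolding LCD_E_def by blast
qed

lemma quaternary_Hermitian_LCD_decomposition:
  fixes C' :: "(F4 ^ 'n) set"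
  assumes C': "linear_code C' k" "LCD_H C'" "k \<ge> 1"
  shows "\<exists>C G (y :: F4 ^ 'n). linear_code C (k - 1) \<and> LCD_H C \<and> gen_matrix G C \<and>
          y \<in> dual_H C \<and> odd (wt y) \<and> gen_matrix (y # G) C'"
proof -
  have "vec.subspace C'" and nondegenerate: "C' \<inter> dual_H C' = {0}"
    using C'(1,2) unfolding linear_code_def LCD_H_def by auto
  obtain y where y: "y \<in> C'" "inner_H y y \<noteq> 0"
    using inner_H_anisotropic_exists[OF \<open>vec.subspace C'\<close> nondegenerate
        linear_code_nonzero[OF C'(1,3)]] .
  then obtain C G where "linear_code C (k - 1)" "C \<inter> dual_H C = {0}" "gen_matrix G C"
      "y \<in> dual_H C" "gen_matrix (y # G) C'"
    using inner_H.split_off_anisotropic[OF C'(1) nondegenerate] by blast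
  moreover have "odd (wt y)"
    using y(2) of_nat_F4_eq_0 unfolding inner_H_self by auto
  ultimately show ?thesis
    unfolding LCD_H_def by blast
qed

theorem theorem3p12:
  fixes C3 :: "(F3 ^ 'n) set" and k3 :: nat
    and C4 :: "(F4 ^ 'm) set" and k4 :: nat
  shows
   "(linear_code C3 k3 \<and> LCD_E C3 \<and> k3 \<ge> 1 \<longrightarrow>
       (\<exists>C G (y :: F3 ^ 'n). linear_code C (k3 - 1) \<and> LCD_E C \<and> gen_matrix G C \<and>
          y \<in> dual_E C \<and> wt y mod 3 \<noteq> 0 \<and> gen_matrix (y # G) C3))
  \<and> (linear_code C4 k4 \<and> LCD_H C4 \<and> k4 \<ge> 1 \<longrightarrow>
       (\<exists>C G (y :: F4 ^ 'm). linear_code C (k4 - 1) \<and> LCD_H C \<and> gen_matrix G C \<and>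
          y \<in> dual_H C \<and> odd (wt y) \<and> gen_matrix (y # G) C4))"
  using ternary_Euclidean_LCD_decomposition quaternary_Hermitian_LCD_decomposition by blast

end
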